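(* Let $(X,Y,Z)$ be a random element whose sample space is partially ordered (with the product order on pairs). If $X\uparrow^{\mathrm{st}}Y$ and $Z$ is independent of $(X,Y)$, then $(X,Z)\uparrow^{\mathrm{st}}Y$ and $(X,Z)\uparrow^{\mathrm{st}}(Y,Z)$.
   Context: For random elements $A,B$ on partially ordered spaces, $A\uparrow^{\mathrm{st}}B$ ($A$ is stochastically increasing in $B$) means that the regular conditional probability $\Pr(A\in\cdot\mid B=b)$ exists and, for every bounded non-decreasing function $h$ of $A$, the map $b\mapsto\mathbb E[h(A)\mid B=b]$ is non-decreasing (i.e. $b\preceq b'$ implies $\mathbb E[h(A)\mid B=b]\le\mathbb E[h(A)\mid B=b']$). *)

theory Defs
  imports "HOL-Probability.Probability" "HOL-Library.Product_Order"
begin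

definition regular_cond_prob ::
  "'w measure \<Rightarrow> 'a measure \<Rightarrow> ('w \<Rightarrow> 'a) \<Rightarrow> 'b measure \<Rightarrow> ('w \<Rightarrow> 'b) \<Rightarrow> ('b \<Rightarrow> 'a measure) \<Rightarrow> bool"
where
  "regular_cond_prob M MA A MB B K \<longleftrightarrow>
     K \<in> MB \<rightarrow>\<^sub>M prob_algebra MA \<and>
     (\<forall>S\<in>sets MA. \<forall>T\<in>sets MB.
        emeasure M {\<omega>\<in>space M. A \<omega> \<in> S \<and> B \<omega> \<in> T}
          = (\<integral>\<^sup>+ b. indicator T b * emeasure (K b) S \<partial>distr M MB B))"

definition stoch_incr ::
  "'w measure \<Rightarrow> 'a::order measure \<Rightarrow> ('w \<Rightarrow> 'a) \<Rightarrow> 'b::order measure \<Rightarrow> ('w \<Rightarrow> 'b) \<Rightarrow> bool"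
where
  "stoch_incr M MA A MB B \<longleftrightarrow>
     (\<exists>K. regular_cond_prob M MA A MB B K \<and>
        (\<forall>h::'a \<Rightarrow> real.
           h \<in> borel_measurable MA \<and> (\<exists>c. \<forall>x\<in>space MA. \<bar>h x\<bar> \<le> c) \<and>
           (\<forall>x\<in>space MA. \<forall>y\<in>space MA. x \<le> y \<longrightarrow> h x \<le> h y) \<longrightarrow>
           (\<forall>b\<in>space MB. \<forall>b'\<in>space MB. b \<le> b' \<longrightarrow>
              (\<integral>x. h x \<partial>K b) \<le> (\<integral>x. h x \<partial>K b'))))"

text \<open>Independence of two random elements with possibly different value types:
independence of the generated sigma-algebras (the preimage families, exactly as in indep_vars_def2) (as in the library's indep_var, which
requires equal value types).\<close>
definition indep_rv ::
  "'w measure \<Rightarrow> 'a measure \<Rightarrow> ('w \<Rightarrow> 'a) \<Rightarrow> 'b measure \<Rightarrow> ('w \<Rightarrow> 'b) \<Rightarrow> bool"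
where
  "indep_rv M MA A MB B \<longleftrightarrow>
     prob_space.indep_set M
       {A -` S \<inter> space M | S. S \<in> sets MA}
       {B -` T \<inter> space M | T. T \<in> sets MB}"

end

theory Submission
  imports Defs
begin

text \<open>Let \<open>K\<close> be a regular conditional distribution of \<open>X\<close> given \<open>Y\<close>. Because \<open>Z\<close> is
independent of \<open>(X, Y)\<close>, the law of \<open>((X, Y), Z)\<close> is the law of \<open>(X, Y)\<close> times the law \<open>P\<^sub>Z\<close>
of \<open>Z\<close>. Hence \<open>y \<mapsto> K\<^sub>y \<otimes> P\<^sub>Z\<close> is a regular conditional distribution of \<open>(X, Z)\<close> given \<open>Y\<close>,
and \<open>(y, z) \<mapsto> K\<^sub>y \<otimes> \<delta>\<^sub>z\<close> is one of \<open>(X, Z)\<close> given \<open>(Y, Z)\<close>. For a bounded increasing \<open>h\<close>, the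
first kernel gives \<open>\<integral>\<integral> h(x, z) dK\<^sub>y(x) dP\<^sub>Z(z)\<close>, increasing in \<open>y\<close> for every fixed \<open>z\<close>; the second
gives \<open>\<integral> h(x, z) dK\<^sub>y(x)\<close>, increasing in \<open>y\<close> by hypothesis and in \<open>z\<close> because \<open>h\<close> is.\<close>

lemma integrable_bounded_prob_algebra:
  fixes h :: "'a \<Rightarrow> real"
  assumes N: "N \<in> space (prob_algebra M)"
    and h: "h \<in> borel_measurable M" and bounded: "\<forall>x\<in>space M. \<bar>h x\<bar> \<le> c"
  shows "integrable N h"
proof -
  interpret prob_space N using N by (simp add: space_prob_algebra)
  have sets: "sets N = sets M" using N by (simp add: space_prob_algebra)
  show ?thesis
  proof (rule integrable_const_bound[where B = c])
    show "AE x in N. norm (h x) \<le> c"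
      using bounded sets_eq_imp_space_eq[OF sets] by (auto intro!: AE_I2)
    show "h \<in> borel_measurable N" using h by (simp add: measurable_cong_sets[OF sets refl])
  qed
qed

lemma mono_on_space_pair_measureD:
  assumes mono: "\<forall>p\<in>space (MA \<Otimes>\<^sub>M MB). \<forall>q\<in>space (MA \<Otimes>\<^sub>M MB). p \<le> q \<longrightarrow> h p \<le> h q"
    and "a \<in> space MA" "a' \<in> space MA" "b \<in> space MB" "b' \<in> space MB" "a \<le> a'" "b \<le> b'"
  shows "h (a, b) \<le> h (a', b')"
  using assms by (simp add: space_pair_measure less_eq_prod_def)

lemma emeasure_distr_Pair_const:
  assumes sets: "sets N = sets MX" and z: "z \<in> space MZ" and W: "W \<in> sets (MX \<Otimes>\<^sub>M MZ)"
  shows "emeasure (distr N (MX \<Otimes>\<^sub>M MZ) (\<lambda>x. (x, z))) W = emeasure N {x\<in>space MX. (x, z) \<in> W}"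
proof -
  have "(\<lambda>x. (x, z)) \<in> N \<rightarrow>\<^sub>M MX \<Otimes>\<^sub>M MZ"
    using measurable_Pair2'[OF z] by (simp add: measurable_cong_sets[OF sets refl])
  then show ?thesis
    using sets_eq_imp_space_eq[OF sets] by (simp add: emeasure_distr[OF _ W] vimage_def Int_def conj_commute)
qed

definition monotone_kernel :: "'a::order measure \<Rightarrow> 'b::order measure \<Rightarrow> ('b \<Rightarrow> 'a measure) \<Rightarrow> bool"
where
  "monotone_kernel MA MB K \<longleftrightarrow>
     (\<forall>h::'a \<Rightarrow> real.
        h \<in> borel_measurable MA \<and> (\<exists>c. \<forall>x\<in>space MA. \<bar>h x\<bar> \<le> c) \<and>
        (\<forall>x\<in>space MA. \<forall>y\<in>space MA. x \<le> y \<longrightarrow> h x \<le> h y) \<longrightarrow>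
        (\<forall>b\<in>space MB. \<forall>b'\<in>space MB. b \<le> b' \<longrightarrow> (\<integral>x. h x \<partial>K b) \<le> (\<integral>x. h x \<partial>K b')))"

lemma stoch_incr_iff_monotone_kernel:
  "stoch_incr M MA A MB B \<longleftrightarrow> (\<exists>K. regular_cond_prob M MA A MB B K \<and> monotone_kernel MA MB K)"
  unfolding stoch_incr_def monotone_kernel_def ..

lemma monotone_kernelI:
  assumes "\<And>(h :: 'a::order \<Rightarrow> real) c b b'. h \<in> borel_measurable MA \<Longrightarrow> \<forall>x\<in>space MA. \<bar>h x\<bar> \<le> c \<Longrightarrow>
      \<forall>x\<in>space MA. \<forall>y\<in>space MA. x \<le> y \<longrightarrow> h x \<le> h y \<Longrightarrow>
      b \<in> space MB \<Longrightarrow> b' \<in> space MB \<Longrightarrow> b \<le> b' \<Longrightarrow> (\<integral>x. h x \<partial>K b) \<le> (\<integral>x. h x \<partial>K b')"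
  shows "monotone_kernel MA MB K"
  unfolding monotone_kernel_def by (intro allI impI ballI, elim conjE exE) (rule assms)

lemma monotone_kernelD:
  fixes h :: "'a::order \<Rightarrow> real"
  assumes "monotone_kernel MA MB K" "h \<in> borel_measurable MA" "\<forall>x\<in>space MA. \<bar>h x\<bar> \<le> c"
    "\<forall>x\<in>space MA. \<forall>y\<in>space MA. x \<le> y \<longrightarrow> h x \<le> h y"
    "b \<in> space MB" "b' \<in> space MB" "b \<le> b'"
  shows "(\<integral>x. h x \<partial>K b) \<le> (\<integral>x. h x \<partial>K b')"
  using assms unfolding monotone_kernel_def by (elim allE[of _ h] impE) auto

lemma monotone_kernelD_Pair:
  fixes h :: "'a::order \<times> 'c::order \<Rightarrow> real"
  assumes mono: "monotone_kernel MX MY K" and h[measurable]: "h \<in> borel_measurable (MX \<Otimes>\<^sub>M MZ)"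
    and bounded: "\<forall>p\<in>space (MX \<Otimes>\<^sub>M MZ). \<bar>h p\<bar> \<le> c"
    and h_mono: "\<forall>p\<in>space (MX \<Otimes>\<^sub>M MZ). \<forall>q\<in>space (MX \<Otimes>\<^sub>M MZ). p \<le> q \<longrightarrow> h p \<le> h q"
    and z: "z \<in> space MZ" and "y \<in> space MY" "y' \<in> space MY" "y \<le> y'"
  shows "(\<integral>x. h (x, z) \<partial>K y) \<le> (\<integral>x. h (x, z) \<partial>K y')"
proof (rule monotone_kernelD[OF mono _ _ _ \<open>y \<in> space MY\<close> \<open>y' \<in> space MY\<close> \<open>y \<le> y'\<close>])
  show "(\<lambda>x. h (x, z)) \<in> borel_measurable MX" using z by measurable
  show "\<forall>x\<in>space MX. \<bar>h (x, z)\<bar> \<le> c" using bounded z by (simp add: space_pair_measure)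
  show "\<forall>x\<in>space MX. \<forall>x'\<in>space MX. x \<le> x' \<longrightarrow> h (x, z) \<le> h (x', z)"
    using mono_on_space_pair_measureD[OF h_mono] z by blast
qed

lemma monotone_kernel_pair_measure:
  assumes K[measurable]: "K \<in> MY \<rightarrow>\<^sub>M prob_algebra MX" and mono: "monotone_kernel MX MY K"
    and Q: "Q \<in> space (prob_algebra MZ)"
  shows "monotone_kernel (MX \<Otimes>\<^sub>M MZ) MY (\<lambda>y. K y \<Otimes>\<^sub>M Q)"
proof (rule monotone_kernelI)
  fix h :: "_ \<Rightarrow> real" and c y y'
  assume h[measurable]: "h \<in> borel_measurable (MX \<Otimes>\<^sub>M MZ)"
    and bounded: "\<forall>p\<in>space (MX \<Otimes>\<^sub>M MZ). \<bar>h p\<bar> \<le> c"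
    and h_mono: "\<forall>p\<in>space (MX \<Otimes>\<^sub>M MZ). \<forall>q\<in>space (MX \<Otimes>\<^sub>M MZ). p \<le> q \<longrightarrow> h p \<le> h q"
    and y: "y \<in> space MY" and y': "y' \<in> space MY" and "y \<le> y'"
  have Q_prob: "prob_space Q" and Q_sets: "sets Q = sets MZ" using Q by (auto simp: space_prob_algebra)
  have integral_eq: "(\<integral>p. h p \<partial>(K u \<Otimes>\<^sub>M Q)) = (\<integral>z. (\<integral>x. h (x, z) \<partial>K u) \<partial>Q)"
    and integrable_inner: "integrable Q (\<lambda>z. \<integral>x. h (x, z) \<partial>K u)"
    if u: "u \<in> space MY" for u
  proof -
    have Ku: "K u \<in> space (prob_algebra MX)" using measurable_space[OF K u] .
    then interpret KQ: pair_prob_space "K u" Q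
      using Q_prob by (simp add: pair_prob_space_def pair_sigma_finite_def space_prob_algebra
          prob_space_imp_sigma_finite)
    have "K u \<Otimes>\<^sub>M Q \<in> space (prob_algebra (MX \<Otimes>\<^sub>M MZ))"
      using measurable_space[OF measurable_pair_prob[OF K measurable_const[OF Q]] u] by simp
    then have "integrable (K u \<Otimes>\<^sub>M Q) (\<lambda>(x, z). h (x, z))"
      using integrable_bounded_prob_algebra[OF _ h bounded] by simp
    then show "(\<integral>p. h p \<partial>(K u \<Otimes>\<^sub>M Q)) = (\<integral>z. (\<integral>x. h (x, z) \<partial>K u) \<partial>Q)"
      and "integrable Q (\<lambda>z. \<integral>x. h (x, z) \<partial>K u)"
      by (simp_all add: KQ.integral_snd KQ.integrable_snd)
  qed
  have "(\<integral>z. (\<integral>x. h (x, z) \<partial>K y) \<partial>Q) \<le> (\<integral>z. (\<integral>x. h (x, z) \<partial>K y') \<partial>Q)"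
  proof (rule integral_mono[OF integrable_inner[OF y] integrable_inner[OF y']])
    fix z assume "z \<in> space Q"
    then have z: "z \<in> space MZ" using sets_eq_imp_space_eq[OF Q_sets] by simp
    show "(\<integral>x. h (x, z) \<partial>K y) \<le> (\<integral>x. h (x, z) \<partial>K y')"
      by (rule monotone_kernelD_Pair[OF mono h bounded h_mono z y y' \<open>y \<le> y'\<close>])
  qed
  then show "(\<integral>p. h p \<partial>(K y \<Otimes>\<^sub>M Q)) \<le> (\<integral>p. h p \<partial>(K y' \<Otimes>\<^sub>M Q))"
    by (simp add: integral_eq y y')
qed

definition kernel_times_dirac ::
  "('b \<Rightarrow> 'a measure) \<Rightarrow> 'a measure \<Rightarrow> 'c measure \<Rightarrow> 'b \<times> 'c \<Rightarrow> ('a \<times> 'c) measure"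
where
  "kernel_times_dirac K MX MZ = (\<lambda>(y, z). distr (K y) (MX \<Otimes>\<^sub>M MZ) (\<lambda>x. (x, z)))"

lemma measurable_kernel_times_dirac:
  assumes [measurable]: "K \<in> MY \<rightarrow>\<^sub>M prob_algebra MX"
  shows "kernel_times_dirac K MX MZ \<in> MY \<Otimes>\<^sub>M MZ \<rightarrow>\<^sub>M prob_algebra (MX \<Otimes>\<^sub>M MZ)"
  unfolding kernel_times_dirac_def by measurable

lemma measurable_emeasure_kernel_times_dirac:
  assumes "K \<in> MY \<rightarrow>\<^sub>M prob_algebra MX" and "W \<in> sets (MX \<Otimes>\<^sub>M MZ)"
  shows "(\<lambda>p. emeasure (kernel_times_dirac K MX MZ p) W) \<in> borel_measurable (MY \<Otimes>\<^sub>M MZ)"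
  using measurable_emeasure_kernel[OF measurable_prob_algebraD[OF measurable_kernel_times_dirac] ] assms .

lemma
  fixes h :: "'a \<times> 'c \<Rightarrow> real"
  assumes K: "K \<in> MY \<rightarrow>\<^sub>M prob_algebra MX" and y: "y \<in> space MY" and z: "z \<in> space MZ"
  shows emeasure_kernel_times_dirac: "W \<in> sets (MX \<Otimes>\<^sub>M MZ) \<Longrightarrow>
      emeasure (kernel_times_dirac K MX MZ (y, z)) W = emeasure (K y) {x\<in>space MX. (x, z) \<in> W}"
    and integral_kernel_times_dirac: "h \<in> borel_measurable (MX \<Otimes>\<^sub>M MZ) \<Longrightarrow>
      (\<integral>p. h p \<partial>kernel_times_dirac K MX MZ (y, z)) = (\<integral>x. h (x, z) \<partial>K y)"
proof -
  have sets: "sets (K y) = sets MX" using subprob_measurableD(2)[OF measurable_prob_algebraD[OF K] y] .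
  show "W \<in> sets (MX \<Otimes>\<^sub>M MZ) \<Longrightarrow>
      emeasure (kernel_times_dirac K MX MZ (y, z)) W = emeasure (K y) {x\<in>space MX. (x, z) \<in> W}"
    unfolding kernel_times_dirac_def by (simp add: emeasure_distr_Pair_const[OF sets z])
  have "(\<lambda>x. (x, z)) \<in> K y \<rightarrow>\<^sub>M MX \<Otimes>\<^sub>M MZ"
    using measurable_Pair2'[OF z] by (simp add: measurable_cong_sets[OF sets refl])
  then show "h \<in> borel_measurable (MX \<Otimes>\<^sub>M MZ) \<Longrightarrow>
      (\<integral>p. h p \<partial>kernel_times_dirac K MX MZ (y, z)) = (\<integral>x. h (x, z) \<partial>K y)"
    unfolding kernel_times_dirac_def by (auto intro: integral_distr)
qed

lemma emeasure_pair_measure_kernel_times_dirac: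
  assumes K: "K \<in> MY \<rightarrow>\<^sub>M prob_algebra MX" and Q: "Q \<in> space (prob_algebra MZ)"
    and y: "y \<in> space MY" and W: "W \<in> sets (MX \<Otimes>\<^sub>M MZ)"
  shows "emeasure (K y \<Otimes>\<^sub>M Q) W = (\<integral>\<^sup>+z. emeasure (kernel_times_dirac K MX MZ (y, z)) W \<partial>Q)"
proof -
  have sets_K: "sets (K y) = sets MX" using subprob_measurableD(2)[OF measurable_prob_algebraD[OF K] y] .
  have sets_Q: "sets Q = sets MZ" using Q by (simp add: space_prob_algebra)
  interpret K_Q: pair_prob_space "K y" Q
    using measurable_space[OF K y] Q
    by (simp add: pair_prob_space_def pair_sigma_finite_def space_prob_algebra prob_space_imp_sigma_finite)
  have "emeasure (K y \<Otimes>\<^sub>M Q) W = (\<integral>\<^sup>+z. emeasure (K y) ((\<lambda>x. (x, z)) -` W) \<partial>Q)"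
    using W by (simp add: K_Q.emeasure_pair_measure_alt2 sets_pair_measure_cong[OF sets_K sets_Q])
  also have "\<dots> = (\<integral>\<^sup>+z. emeasure (kernel_times_dirac K MX MZ (y, z)) W \<partial>Q)"
  proof (rule nn_integral_cong)
    fix z assume "z \<in> space Q"
    then have z: "z \<in> space MZ" using sets_eq_imp_space_eq[OF sets_Q] by simp
    have "(\<lambda>x. (x, z)) -` W = {x\<in>space MX. (x, z) \<in> W}"
      using sets.sets_into_space[OF W] by (auto simp: space_pair_measure)
    then show "emeasure (K y) ((\<lambda>x. (x, z)) -` W) = emeasure (kernel_times_dirac K MX MZ (y, z)) W"
      by (simp add: emeasure_kernel_times_dirac[OF K y z W])
  qed
  finally show ?thesis .
qed

lemma monotone_kernel_times_dirac:
  assumes K: "K \<in> MY \<rightarrow>\<^sub>M prob_algebra MX" and mono: "monotone_kernel MX MY K"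
  shows "monotone_kernel (MX \<Otimes>\<^sub>M MZ) (MY \<Otimes>\<^sub>M MZ) (kernel_times_dirac K MX MZ)"
proof (rule monotone_kernelI)
  fix h :: "_ \<Rightarrow> real" and c p p'
  assume h[measurable]: "h \<in> borel_measurable (MX \<Otimes>\<^sub>M MZ)"
    and bounded: "\<forall>p\<in>space (MX \<Otimes>\<^sub>M MZ). \<bar>h p\<bar> \<le> c"
    and h_mono: "\<forall>p\<in>space (MX \<Otimes>\<^sub>M MZ). \<forall>q\<in>space (MX \<Otimes>\<^sub>M MZ). p \<le> q \<longrightarrow> h p \<le> h q"
    and p: "p \<in> space (MY \<Otimes>\<^sub>M MZ)" and p': "p' \<in> space (MY \<Otimes>\<^sub>M MZ)" and "p \<le> p'"
  obtain y z y' z' where p_eq: "p = (y, z)" and p'_eq: "p' = (y', z')" by fastforce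
  have y: "y \<in> space MY" and z: "z \<in> space MZ" and y': "y' \<in> space MY" and z': "z' \<in> space MZ"
    using p p' unfolding p_eq p'_eq by (simp_all add: space_pair_measure)
  have "y \<le> y'" "z \<le> z'" using \<open>p \<le> p'\<close> unfolding p_eq p'_eq by simp_all
  have "(\<integral>x. h (x, z) \<partial>K y) \<le> (\<integral>x. h (x, z) \<partial>K y')"
    by (rule monotone_kernelD_Pair[OF mono h bounded h_mono z y y' \<open>y \<le> y'\<close>])
  also have "\<dots> \<le> (\<integral>x. h (x, z') \<partial>K y')"
  proof (rule integral_mono)
    have Ky': "K y' \<in> space (prob_algebra MX)" using measurable_space[OF K y'] .
    have integrable: "integrable (K y') (\<lambda>x. h (x, w))" if w: "w \<in> space MZ" for w
    proof (rule integrable_bounded_prob_algebra[OF Ky'])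
      show "(\<lambda>x. h (x, w)) \<in> borel_measurable MX" using w by measurable
      show "\<forall>x\<in>space MX. \<bar>h (x, w)\<bar> \<le> c" using bounded w by (simp add: space_pair_measure)
    qed
    show "integrable (K y') (\<lambda>x. h (x, z))" "integrable (K y') (\<lambda>x. h (x, z'))"
      using integrable z z' by simp_all
    fix x assume "x \<in> space (K y')"
    then have "x \<in> space MX"
      using subprob_measurableD(1)[OF measurable_prob_algebraD[OF K] y'] by simp
    then show "h (x, z) \<le> h (x, z')"
      using mono_on_space_pair_measureD[OF h_mono _ _ z z' order.refl \<open>z \<le> z'\<close>] by simp
  qed
  finally show "(\<integral>q. h q \<partial>kernel_times_dirac K MX MZ p) \<le> (\<integral>q. h q \<partial>kernel_times_dirac K MX MZ p')"
    unfolding p_eq p'_eq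
    using integral_kernel_times_dirac[OF K y z h] integral_kernel_times_dirac[OF K y' z' h] by simp
qed

lemma prob_algebra_pair_measure_eqI:
  assumes P: "P \<in> space (prob_algebra (MA \<Otimes>\<^sub>M MB))" and Q: "Q \<in> space (prob_algebra (MA \<Otimes>\<^sub>M MB))"
    and eq: "\<And>S T. S \<in> sets MA \<Longrightarrow> T \<in> sets MB \<Longrightarrow> emeasure P (S \<times> T) = emeasure Q (S \<times> T)"
  shows "P = Q"
proof (rule measure_eqI_generator_eq[OF Int_stable_pair_measure_generator[of MA MB]])
  let ?\<Omega> = "space MA \<times> space MB" and ?E = "{S \<times> T |S T. S \<in> sets MA \<and> T \<in> sets MB}"
  show "?E \<subseteq> Pow ?\<Omega>"
    using sets.sets_into_space[of _ MA] sets.sets_into_space[of _ MB] by blast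
  show "sets P = sigma_sets ?\<Omega> ?E" "sets Q = sigma_sets ?\<Omega> ?E"
    using P Q by (simp_all add: space_prob_algebra sets_pair_measure)
  show "range (\<lambda>_. ?\<Omega>) \<subseteq> ?E" "(\<Union>i. ?\<Omega>) = ?\<Omega>" by auto
  show "emeasure P ?\<Omega> \<noteq> \<infinity>"
    using in_space_prob_algebra[OF P] by (simp add: space_pair_measure)
  show "X \<in> ?E \<Longrightarrow> emeasure P X = emeasure Q X" for X using eq by auto
qed

lemma measurable_regular_cond_prob:
  "regular_cond_prob M MX X MY Y K \<Longrightarrow> K \<in> MY \<rightarrow>\<^sub>M prob_algebra MX"
  unfolding regular_cond_prob_def by blast

lemma regular_cond_prob_joint_law:
  assumes M: "prob_space M" and X[measurable]: "X \<in> M \<rightarrow>\<^sub>M MX" and Y[measurable]: "Y \<in> M \<rightarrow>\<^sub>M MY"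
    and K: "regular_cond_prob M MX X MY Y K"
  shows "distr M (MX \<Otimes>\<^sub>M MY) (\<lambda>\<omega>. (X \<omega>, Y \<omega>))
    = distr M MY Y \<bind> (\<lambda>y. distr (K y) (MX \<Otimes>\<^sub>M MY) (\<lambda>x. (x, y)))"
proof (rule prob_algebra_pair_measure_eqI)
  note K_meas[measurable] = measurable_regular_cond_prob[OF K]
  have PY: "distr M MY Y \<in> space (prob_algebra MY)"
    using M by (simp add: space_prob_algebra prob_space.prob_space_distr)
  have F: "(\<lambda>y. distr (K y) (MX \<Otimes>\<^sub>M MY) (\<lambda>x. (x, y))) \<in> MY \<rightarrow>\<^sub>M prob_algebra (MX \<Otimes>\<^sub>M MY)"
    by measurable
  show "distr M (MX \<Otimes>\<^sub>M MY) (\<lambda>\<omega>. (X \<omega>, Y \<omega>)) \<in> space (prob_algebra (MX \<Otimes>\<^sub>M MY))"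
    using M by (simp add: space_prob_algebra prob_space.prob_space_distr)
  show "distr M MY Y \<bind> (\<lambda>y. distr (K y) (MX \<Otimes>\<^sub>M MY) (\<lambda>x. (x, y))) \<in> space (prob_algebra (MX \<Otimes>\<^sub>M MY))"
    using prob_space_bind'[OF PY F] sets_bind'[OF PY F] by (simp add: space_prob_algebra)
  fix S T assume S: "S \<in> sets MX" and T: "T \<in> sets MY"
  have "emeasure (distr M (MX \<Otimes>\<^sub>M MY) (\<lambda>\<omega>. (X \<omega>, Y \<omega>))) (S \<times> T)
      = emeasure M {\<omega>\<in>space M. X \<omega> \<in> S \<and> Y \<omega> \<in> T}"
    using S T by (simp add: emeasure_distr vimage_def Int_def conj_commute)
  also have "\<dots> = (\<integral>\<^sup>+y. indicator T y * emeasure (K y) S \<partial>distr M MY Y)"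
    using K S T unfolding regular_cond_prob_def by blast
  also have "\<dots> = (\<integral>\<^sup>+y. emeasure (distr (K y) (MX \<Otimes>\<^sub>M MY) (\<lambda>x. (x, y))) (S \<times> T) \<partial>distr M MY Y)"
  proof (rule nn_integral_cong)
    fix y assume "y \<in> space (distr M MY Y)"
    then have y: "y \<in> space MY" by simp
    have sets: "sets (K y) = sets MX" using subprob_measurableD(2)[OF measurable_prob_algebraD[OF K_meas] y] .
    have "{x\<in>space MX. (x, y) \<in> S \<times> T} = (if y \<in> T then S else {})"
      using sets.sets_into_space[OF S] by auto
    then show "indicator T y * emeasure (K y) S = emeasure (distr (K y) (MX \<Otimes>\<^sub>M MY) (\<lambda>x. (x, y))) (S \<times> T)"
      using S T by (simp add: emeasure_distr_Pair_const[OF sets y])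
  qed
  also have "\<dots> = emeasure (distr M MY Y \<bind> (\<lambda>y. distr (K y) (MX \<Otimes>\<^sub>M MY) (\<lambda>x. (x, y)))) (S \<times> T)"
    using S T by (simp add: emeasure_bind_prob_algebra[OF PY F])
  finally show "emeasure (distr M (MX \<Otimes>\<^sub>M MY) (\<lambda>\<omega>. (X \<omega>, Y \<omega>))) (S \<times> T)
      = emeasure (distr M MY Y \<bind> (\<lambda>y. distr (K y) (MX \<Otimes>\<^sub>M MY) (\<lambda>x. (x, y)))) (S \<times> T)" .
qed

lemma indep_rv_compose_left:
  assumes M: "prob_space M" and indep: "indep_rv M MA A MB B"
    and A: "A \<in> M \<rightarrow>\<^sub>M MA" and f: "f \<in> MA \<rightarrow>\<^sub>M MC"
  shows "indep_rv M MC (\<lambda>\<omega>. f (A \<omega>)) MB B"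
proof -
  interpret prob_space M by fact
  have "{(\<lambda>\<omega>. f (A \<omega>)) -` S \<inter> space M |S. S \<in> sets MC} \<subseteq> {A -` S \<inter> space M |S. S \<in> sets MA}"
  proof safe
    fix S assume "S \<in> sets MC"
    then show "\<exists>S'. (\<lambda>\<omega>. f (A \<omega>)) -` S \<inter> space M = A -` S' \<inter> space M \<and> S' \<in> sets MA"
      using measurable_space[OF A] f
      by (intro exI[of _ "f -` S \<inter> space MA"]) (auto simp: measurable_sets)
  qed
  then show ?thesis
    using indep unfolding indep_rv_def indep_set_def
    by (elim indep_sets_mono_sets) (auto split: bool.split)
qed

lemma indep_rv_joint_law:
  assumes M: "prob_space M" and A: "A \<in> M \<rightarrow>\<^sub>M MA" and B: "B \<in> M \<rightarrow>\<^sub>M MB"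
    and indep: "indep_rv M MA A MB B"
  shows "distr M (MA \<Otimes>\<^sub>M MB) (\<lambda>\<omega>. (A \<omega>, B \<omega>)) = distr M MA A \<Otimes>\<^sub>M distr M MB B"
proof (rule pair_measure_eqI[symmetric])
  interpret prob_space M by fact
  show "sigma_finite_measure (distr M MA A)" "sigma_finite_measure (distr M MB B)"
    using A B by (simp_all add: prob_space_distr prob_space_imp_sigma_finite)
  show "sets (distr M MA A \<Otimes>\<^sub>M distr M MB B) = sets (distr M (MA \<Otimes>\<^sub>M MB) (\<lambda>\<omega>. (A \<omega>, B \<omega>)))"
    by simp
  fix S T assume "S \<in> sets (distr M MA A)" and "T \<in> sets (distr M MB B)"
  then have S: "S \<in> sets MA" and T: "T \<in> sets MB" by simp_all
  have "prob ((A -` S \<inter> space M) \<inter> (B -` T \<inter> space M)) = prob (A -` S \<inter> space M) * prob (B -` T \<inter> space M)"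
    using indep S T unfolding indep_rv_def by (auto intro!: indep_setD)
  moreover have "(\<lambda>\<omega>. (A \<omega>, B \<omega>)) -` (S \<times> T) \<inter> space M = (A -` S \<inter> space M) \<inter> (B -` T \<inter> space M)"
    by auto
  ultimately show "emeasure (distr M MA A) S * emeasure (distr M MB B) T
      = emeasure (distr M (MA \<Otimes>\<^sub>M MB) (\<lambda>\<omega>. (A \<omega>, B \<omega>))) (S \<times> T)"
    using A B S T by (simp add: emeasure_distr emeasure_eq_measure ennreal_mult)
qed

locale indep_of_regular_cond_prob = prob_space M for M :: "'w measure" +
  fixes MX :: "'a measure" and MY :: "'b measure" and MZ :: "'c measure"
    and X :: "'w \<Rightarrow> 'a" and Y :: "'w \<Rightarrow> 'b" and Z :: "'w \<Rightarrow> 'c" and K :: "'b \<Rightarrow> 'a measure"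
  assumes X[measurable]: "X \<in> M \<rightarrow>\<^sub>M MX" and Y[measurable]: "Y \<in> M \<rightarrow>\<^sub>M MY"
    and Z[measurable]: "Z \<in> M \<rightarrow>\<^sub>M MZ"
    and rcp: "regular_cond_prob M MX X MY Y K"
    and indep: "indep_rv M (MX \<Otimes>\<^sub>M MY) (\<lambda>\<omega>. (X \<omega>, Y \<omega>)) MZ Z"
begin

lemmas K_measurable[measurable] = measurable_regular_cond_prob[OF rcp]

lemma sets_K: "y \<in> space MY \<Longrightarrow> sets (K y) = sets MX"
  using subprob_measurableD(2)[OF measurable_prob_algebraD[OF K_measurable]] .

lemma law_in_prob_algebra: "V \<in> M \<rightarrow>\<^sub>M MV \<Longrightarrow> distr M MV V \<in> space (prob_algebra MV)"
  by (simp add: space_prob_algebra prob_space_distr)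

sublocale Y_Z: pair_prob_space "distr M MY Y" "distr M MZ Z"
  by (simp add: pair_prob_space_def pair_sigma_finite_def prob_space_distr prob_space_imp_sigma_finite)

lemma sets_laws_YZ: "sets (distr M MY Y \<Otimes>\<^sub>M distr M MZ Z) = sets (MY \<Otimes>\<^sub>M MZ)"
  by (rule sets_pair_measure_cong) simp_all

lemma law_YZ: "distr M (MY \<Otimes>\<^sub>M MZ) (\<lambda>\<omega>. (Y \<omega>, Z \<omega>)) = distr M MY Y \<Otimes>\<^sub>M distr M MZ Z"
proof (rule indep_rv_joint_law[OF prob_space_axioms Y Z])
  show "indep_rv M MY Y MZ Z"
    using indep_rv_compose_left[OF prob_space_axioms indep _ measurable_snd] by simp
qed

lemma emeasure_joint_law:
  assumes V: "V \<in> sets ((MX \<Otimes>\<^sub>M MY) \<Otimes>\<^sub>M MZ)"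
  shows "emeasure M {\<omega>\<in>space M. ((X \<omega>, Y \<omega>), Z \<omega>) \<in> V}
    = (\<integral>\<^sup>+z. \<integral>\<^sup>+y. emeasure (K y) {x\<in>space MX. ((x, y), z) \<in> V} \<partial>distr M MY Y \<partial>distr M MZ Z)"
proof -
  let ?PXY = "distr M (MX \<Otimes>\<^sub>M MY) (\<lambda>\<omega>. (X \<omega>, Y \<omega>))"
  interpret XY_Z: pair_prob_space ?PXY "distr M MZ Z"
    by (simp add: pair_prob_space_def pair_sigma_finite_def prob_space_distr prob_space_imp_sigma_finite)
  have F: "(\<lambda>y. distr (K y) (MX \<Otimes>\<^sub>M MY) (\<lambda>x. (x, y))) \<in> MY \<rightarrow>\<^sub>M prob_algebra (MX \<Otimes>\<^sub>M MY)"
    by measurable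
  have "emeasure M {\<omega>\<in>space M. ((X \<omega>, Y \<omega>), Z \<omega>) \<in> V}
      = emeasure (distr M ((MX \<Otimes>\<^sub>M MY) \<Otimes>\<^sub>M MZ) (\<lambda>\<omega>. ((X \<omega>, Y \<omega>), Z \<omega>))) V"
    using V by (simp add: emeasure_distr vimage_def Int_def conj_commute)
  also have "\<dots> = emeasure (?PXY \<Otimes>\<^sub>M distr M MZ Z) V"
    by (simp add: indep_rv_joint_law[OF prob_space_axioms _ Z indep])
  also have "\<dots> = (\<integral>\<^sup>+z. emeasure ?PXY ((\<lambda>p. (p, z)) -` V) \<partial>distr M MZ Z)"
    using V by (simp add: XY_Z.emeasure_pair_measure_alt2)
  also have "\<dots> = (\<integral>\<^sup>+z. \<integral>\<^sup>+y. emeasure (K y) {x\<in>space MX. ((x, y), z) \<in> V} \<partial>distr M MY Y \<partial>distr M MZ Z)"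
  proof (rule nn_integral_cong)
    fix z
    have Vz: "(\<lambda>p. (p, z)) -` V \<in> sets (MX \<Otimes>\<^sub>M MY)" using sets_Pair2[OF V] .
    have "emeasure ?PXY ((\<lambda>p. (p, z)) -` V)
        = (\<integral>\<^sup>+y. emeasure (distr (K y) (MX \<Otimes>\<^sub>M MY) (\<lambda>x. (x, y))) ((\<lambda>p. (p, z)) -` V) \<partial>distr M MY Y)"
      unfolding regular_cond_prob_joint_law[OF prob_space_axioms X Y rcp]
      using emeasure_bind_prob_algebra[OF law_in_prob_algebra[OF Y] F Vz] .
    also have "\<dots> = (\<integral>\<^sup>+y. emeasure (K y) {x\<in>space MX. ((x, y), z) \<in> V} \<partial>distr M MY Y)"
    proof (rule nn_integral_cong)
      fix y assume "y \<in> space (distr M MY Y)"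
      then have y: "y \<in> space MY" by simp
      show "emeasure (distr (K y) (MX \<Otimes>\<^sub>M MY) (\<lambda>x. (x, y))) ((\<lambda>p. (p, z)) -` V)
          = emeasure (K y) {x\<in>space MX. ((x, y), z) \<in> V}"
        by (simp add: emeasure_distr_Pair_const[OF sets_K[OF y] y Vz])
    qed
    finally show "emeasure ?PXY ((\<lambda>p. (p, z)) -` V)
        = (\<integral>\<^sup>+y. emeasure (K y) {x\<in>space MX. ((x, y), z) \<in> V} \<partial>distr M MY Y)" .
  qed
  finally show ?thesis .
qed

lemma emeasure_joint_law_kernel_times_dirac:
  assumes W: "W \<in> sets (MX \<Otimes>\<^sub>M MZ)" and T: "T \<in> sets (MY \<Otimes>\<^sub>M MZ)"
  shows "emeasure M {\<omega>\<in>space M. (X \<omega>, Z \<omega>) \<in> W \<and> (Y \<omega>, Z \<omega>) \<in> T}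
    = (\<integral>\<^sup>+p. indicator T p * emeasure (kernel_times_dirac K MX MZ p) W \<partial>(distr M MY Y \<Otimes>\<^sub>M distr M MZ Z))"
proof -
  define V where "V = {q \<in> space ((MX \<Otimes>\<^sub>M MY) \<Otimes>\<^sub>M MZ). (fst (fst q), snd q) \<in> W \<and> (snd (fst q), snd q) \<in> T}"
  have V: "V \<in> sets ((MX \<Otimes>\<^sub>M MY) \<Otimes>\<^sub>M MZ)" unfolding V_def using W T by measurable
  have "emeasure M {\<omega>\<in>space M. (X \<omega>, Z \<omega>) \<in> W \<and> (Y \<omega>, Z \<omega>) \<in> T}
      = emeasure M {\<omega>\<in>space M. ((X \<omega>, Y \<omega>), Z \<omega>) \<in> V}"
    unfolding V_def using measurable_space[OF X] measurable_space[OF Y] measurable_space[OF Z]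
    by (intro arg_cong2[where f = emeasure] refl) (auto simp: space_pair_measure)
  also have "\<dots> = (\<integral>\<^sup>+z. \<integral>\<^sup>+y. emeasure (K y) {x\<in>space MX. ((x, y), z) \<in> V} \<partial>distr M MY Y \<partial>distr M MZ Z)"
    by (rule emeasure_joint_law[OF V])
  also have "\<dots> = (\<integral>\<^sup>+z. \<integral>\<^sup>+y. indicator T (y, z) * emeasure (kernel_times_dirac K MX MZ (y, z)) W
      \<partial>distr M MY Y \<partial>distr M MZ Z)"
  proof (intro nn_integral_cong)
    fix z y assume "z \<in> space (distr M MZ Z)" and "y \<in> space (distr M MY Y)"
    then have y: "y \<in> space MY" and z: "z \<in> space MZ" by simp_all
    have "{x\<in>space MX. ((x, y), z) \<in> V} = (if (y, z) \<in> T then {x\<in>space MX. (x, z) \<in> W} else {})"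
      using y z by (auto simp: V_def space_pair_measure)
    then show "emeasure (K y) {x\<in>space MX. ((x, y), z) \<in> V}
        = indicator T (y, z) * emeasure (kernel_times_dirac K MX MZ (y, z)) W"
      by (simp add: emeasure_kernel_times_dirac[OF K_measurable y z W])
  qed
  also have "\<dots> = (\<integral>\<^sup>+p. indicator T p * emeasure (kernel_times_dirac K MX MZ p) W \<partial>(distr M MY Y \<Otimes>\<^sub>M distr M MZ Z))"
  proof -
    have "(\<lambda>p. indicator T p * emeasure (kernel_times_dirac K MX MZ p) W)
        \<in> borel_measurable (distr M MY Y \<Otimes>\<^sub>M distr M MZ Z)"
      unfolding measurable_cong_sets[OF sets_laws_YZ refl]
      using measurable_emeasure_kernel_times_dirac[OF K_measurable W] T by measurable
    from Y_Z.nn_integral_snd[OF this] show ?thesis by simp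
  qed
  finally show ?thesis .
qed

lemma regular_cond_prob_kernel_times_dirac:
  "regular_cond_prob M (MX \<Otimes>\<^sub>M MZ) (\<lambda>\<omega>. (X \<omega>, Z \<omega>)) (MY \<Otimes>\<^sub>M MZ) (\<lambda>\<omega>. (Y \<omega>, Z \<omega>))
     (kernel_times_dirac K MX MZ)"
  unfolding regular_cond_prob_def law_YZ
  using measurable_kernel_times_dirac[OF K_measurable] emeasure_joint_law_kernel_times_dirac by blast

lemma regular_cond_prob_pair_measure:
  "regular_cond_prob M (MX \<Otimes>\<^sub>M MZ) (\<lambda>\<omega>. (X \<omega>, Z \<omega>)) MY Y (\<lambda>y. K y \<Otimes>\<^sub>M distr M MZ Z)"
  unfolding regular_cond_prob_def
proof (intro conjI ballI)
  show "(\<lambda>y. K y \<Otimes>\<^sub>M distr M MZ Z) \<in> MY \<rightarrow>\<^sub>M prob_algebra (MX \<Otimes>\<^sub>M MZ)"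
    using measurable_pair_prob[OF K_measurable measurable_const[OF law_in_prob_algebra[OF Z]]] .
  fix W T assume W: "W \<in> sets (MX \<Otimes>\<^sub>M MZ)" and T: "T \<in> sets MY"
  have "emeasure M {\<omega>\<in>space M. (X \<omega>, Z \<omega>) \<in> W \<and> Y \<omega> \<in> T}
      = emeasure M {\<omega>\<in>space M. (X \<omega>, Z \<omega>) \<in> W \<and> (Y \<omega>, Z \<omega>) \<in> T \<times> space MZ}"
    using measurable_space[OF Z] by (intro arg_cong2[where f = emeasure]) auto
  also have "\<dots> = (\<integral>\<^sup>+p. indicator (T \<times> space MZ) p * emeasure (kernel_times_dirac K MX MZ p) W
      \<partial>(distr M MY Y \<Otimes>\<^sub>M distr M MZ Z))"
    using W T by (intro emeasure_joint_law_kernel_times_dirac) auto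
  also have "\<dots> = (\<integral>\<^sup>+y. \<integral>\<^sup>+z. indicator T y * emeasure (kernel_times_dirac K MX MZ (y, z)) W
      \<partial>distr M MZ Z \<partial>distr M MY Y)"
  proof -
    have "(\<lambda>p. indicator (T \<times> space MZ) p * emeasure (kernel_times_dirac K MX MZ p) W)
        \<in> borel_measurable (distr M MY Y \<Otimes>\<^sub>M distr M MZ Z)"
      unfolding measurable_cong_sets[OF sets_laws_YZ refl]
      using measurable_emeasure_kernel_times_dirac[OF K_measurable W] T by measurable
    from Y_Z.nn_integral_snd[OF this] Y_Z.Fubini[OF this] show ?thesis
      by (auto intro!: nn_integral_cong simp: indicator_times)
  qed
  also have "\<dots> = (\<integral>\<^sup>+y. indicator T y * emeasure (K y \<Otimes>\<^sub>M distr M MZ Z) W \<partial>distr M MY Y)"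
    by (intro nn_integral_cong)
      (simp add: emeasure_pair_measure_kernel_times_dirac[OF K_measurable law_in_prob_algebra[OF Z] _ W]
        split: split_indicator)
  finally show "emeasure M {\<omega>\<in>space M. (X \<omega>, Z \<omega>) \<in> W \<and> Y \<omega> \<in> T}
      = (\<integral>\<^sup>+y. indicator T y * emeasure (K y \<Otimes>\<^sub>M distr M MZ Z) W \<partial>distr M MY Y)" .
qed

end

theorem lemma4:
  fixes M :: "'w measure"
    and MX :: "'a::order measure" and MY :: "'b::order measure" and MZ :: "'c::order measure"
    and X :: "'w \<Rightarrow> 'a" and Y :: "'w \<Rightarrow> 'b" and Z :: "'w \<Rightarrow> 'c"
  assumes "prob_space M"
    and "X \<in> M \<rightarrow>\<^sub>M MX" and "Y \<in> M \<rightarrow>\<^sub>M MY" and "Z \<in> M \<rightarrow>\<^sub>M MZ"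
    and "stoch_incr M MX X MY Y"
    and "indep_rv M (MX \<Otimes>\<^sub>M MY) (\<lambda>\<omega>. (X \<omega>, Y \<omega>)) MZ Z"
  shows "stoch_incr M (MX \<Otimes>\<^sub>M MZ) (\<lambda>\<omega>. (X \<omega>, Z \<omega>)) MY Y \<and>
         stoch_incr M (MX \<Otimes>\<^sub>M MZ) (\<lambda>\<omega>. (X \<omega>, Z \<omega>)) (MY \<Otimes>\<^sub>M MZ) (\<lambda>\<omega>. (Y \<omega>, Z \<omega>))"
proof -
  obtain K where rcp: "regular_cond_prob M MX X MY Y K" and mono: "monotone_kernel MX MY K"
    using assms(5) unfolding stoch_incr_iff_monotone_kernel by blast
  interpret indep_of_regular_cond_prob M MX MY MZ X Y Z K
    using assms rcp by (simp add: indep_of_regular_cond_prob_def indep_of_regular_cond_prob_axioms_def)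
  show ?thesis
    unfolding stoch_incr_iff_monotone_kernel
    using regular_cond_prob_pair_measure regular_cond_prob_kernel_times_dirac
      monotone_kernel_pair_measure[OF K_measurable mono law_in_prob_algebra[OF assms(4)]]
      monotone_kernel_times_dirac[OF K_measurable mono]
    by blast
qed

end
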